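(* In the setting described in the context, there exists a constant $C$ such that $$|p(x)-\widehat p(x)|\le C\,\phi(x)^2\qquad\text{for all }x\in U_\delta.$$
   Context: $n\in\{1,2\}$; $\Gamma\subset\mathbb R^{n+1}$ is a smooth, connected, compact, orientable hypersurface without boundary with unit outer normal $\nu$; $d$ is the signed distance to $\Gamma$ (negative inside), and $\Omega$ is an open neighbourhood of $\Gamma$ on which $d$ is smooth, so that $\widehat p(x)=x-d(x)\nabla d(x)$ is the closest point on $\Gamma$ to $x\in\Omega$. $A=(a_{ij})$ with $a_{ij}\in C^2(\Gamma)$ symmetric, $\sum_{i,j}a_{ij}(x)\xi_i\nu_j(x)=0$ and $\sum_{i,j}a_{ij}(x)\xi_i\xi_j\ge\alpha|\xi|^2$ for $\xi\in T_x\Gamma$ ($\alpha>0$), and $A(x)\nu(x)=\nu(x)$. $\phi:\overline\Omega\to\mathbb R$ is smooth with $\Gamma=\{\phi=0\}$ and $0<c_0\le|\nabla\phi|\le c_1$ on $\overline\Omega$; $U_r=\{x\in\Omega:|\phi(x)|<r\}$. $\delta>0$ is such that for every $p\in\Gamma$ the ODE $\gamma_p'(s)=\frac{A(p)\nabla\phi(\gamma_p(s))}{A(p)\nabla\phi(\gamma_p(s))\cdot\nabla\phi(\gamma_p(s))}$, $\gamma_p(0)=p$, has a unique solution on $(-\delta,\delta)$; $F(p,s)=\gamma_p(s)$ is then a $C^2$ bijection of $\Gamma\times(-\delta,\delta)$ onto $U_\delta$, and since $\phi(\gamma_p(s))=s$ its inverse is $F^{-1}(x)=(p(x),\phi(x))$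 with $p\in C^2(U_\delta;\mathbb R^{n+1})$, $p(x)\in\Gamma$. *)

theory Defs
  imports "HOL-Analysis.Analysis"
begin

definition grad :: "('a::euclidean_space \<Rightarrow> real) \<Rightarrow> 'a \<Rightarrow> 'a" where
  "grad f x = (\<Sum>b\<in>Basis. frechet_derivative f (at x) b *\<^sub>R b)"

fun Ck_on :: "nat \<Rightarrow> 'a::euclidean_space set \<Rightarrow> ('a \<Rightarrow> 'b::real_normed_vector) \<Rightarrow> bool" where
  "Ck_on 0 S f = continuous_on S f"
| "Ck_on (Suc k) S f = (f differentiable_on S \<and>
      (\<forall>b\<in>Basis. Ck_on k S (\<lambda>x. frechet_derivative f (at x) b)))"

definition smooth_on :: "'a::euclidean_space set \<Rightarrow> ('a \<Rightarrow> 'b::real_normed_vector) \<Rightarrow> bool" where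
  "smooth_on S f = (\<forall>k. Ck_on k S f)"

definition Ck_on_surface :: "nat \<Rightarrow> 'a::euclidean_space set \<Rightarrow> ('a \<Rightarrow> real) \<Rightarrow> bool" where
  "Ck_on_surface k \<Gamma> f = (\<exists>W g. open W \<and> \<Gamma> \<subseteq> W \<and> Ck_on k W g \<and> (\<forall>x\<in>\<Gamma>. g x = f x))"

definition tangent_space :: "'a::euclidean_space set \<Rightarrow> 'a \<Rightarrow> 'a set" where
  "tangent_space \<Gamma> x = {v. \<exists>c::real \<Rightarrow> 'a. c 0 = x \<and> (\<forall>t. c t \<in> \<Gamma>) \<and>
        (c has_vector_derivative v) (at 0)}"

definition is_unit_outer_normal :: "'a::euclidean_space set \<Rightarrow> 'a \<Rightarrow> 'a \<Rightarrow> bool" where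
  "is_unit_outer_normal \<Gamma> x n = (norm n = 1 \<and> (\<forall>v\<in>tangent_space \<Gamma> x. n \<bullet> v = 0) \<and>
        (\<exists>e>0. \<forall>t. 0 < t \<and> t < e \<longrightarrow> x + t *\<^sub>R n \<in> outside \<Gamma>))"

definition signed_dist :: "'a::euclidean_space set \<Rightarrow> 'a \<Rightarrow> real" where
  "signed_dist \<Gamma> x = (if x \<in> inside \<Gamma> then - infdist x \<Gamma> else infdist x \<Gamma>)"

definition hat_p :: "'a::euclidean_space set \<Rightarrow> 'a \<Rightarrow> 'a" where
  "hat_p \<Gamma> x = x - signed_dist \<Gamma> x *\<^sub>R grad (signed_dist \<Gamma>) x"

definition flow_field :: "('a::euclidean_space \<Rightarrow> 'a \<Rightarrow> 'a) \<Rightarrow> ('a \<Rightarrow> real) \<Rightarrow> 'a \<Rightarrow> 'a \<Rightarrow> 'a" where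
  "flow_field A \<phi> q y = (1 / (A q (grad \<phi> y) \<bullet> grad \<phi> y)) *\<^sub>R A q (grad \<phi> y)"

end

theory Submission
  imports Defs
begin

(*
  Put G = p - hat_p. Both maps are C^2 retractions of the tube U_delta onto \<Gamma>, so G vanishes
  on \<Gamma>, and so does its derivative: along tangent vectors because G is zero on curves in \<Gamma>,
  and along n = grad \<phi>(q) because (i) p is constant on the flow line \<gamma>_q, which leaves q in the
  direction A(q) n = n, and (ii) hat_p, being the nearest-point map, moves q + t n by at most
  t |n| while keeping its image on \<Gamma>, which forces its derivative in the direction n to vanish.
  Taylor's theorem on a compact neighbourhood of \<Gamma> then gives |G x| <= C dist(x, \<Gamma>)^2, and
  dist(x, \<Gamma>) <= |x - p x| <= V |\<phi> x| since x = \<gamma>_{p x}(\<phi> x) and the flow field is bounded.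
*)

section \<open>$C^k$ functions\<close>

lemma Ck_on_cong:
  assumes "open S" and "\<And>x. x \<in> S \<Longrightarrow> f x = g x"
  shows "Ck_on k S f = Ck_on k S g"
  using assms(2)
proof (induction k arbitrary: f g)
  case 0
  then show ?case by (simp cong: continuous_on_cong)
next
  case (Suc k)
  have "g x = f x" if "x \<in> S" for x
    using Suc.prems that by simp
  then have diff_iff: "f differentiable (at x) \<longleftrightarrow> g differentiable (at x)" if "x \<in> S" for x
    using has_derivative_transform_within_open[OF _ assms(1) that, of f _ UNIV g]
      has_derivative_transform_within_open[OF _ assms(1) that, of g _ UNIV f] Suc.prems
    unfolding differentiable_def by blast
  then have diff_on_iff: "f differentiable_on S \<longleftrightarrow> g differentiable_on S"
    using assms(1) by (simp add: differentiable_on_eq_differentiable_at)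
  show ?case
  proof (cases "f differentiable_on S")
    case True
    then have "frechet_derivative f (at x) = frechet_derivative g (at x)" if "x \<in> S" for x
      using assms(1) that Suc.prems
      by (intro frechet_derivative_transform_within_open) (auto simp: differentiable_on_eq_differentiable_at)
    then have "Ck_on k S (\<lambda>x. frechet_derivative f (at x) b) = Ck_on k S (\<lambda>x. frechet_derivative g (at x) b)" for b
      by (intro Suc.IH) simp
    then show ?thesis
      using diff_on_iff by simp
  next
    case False
    then show ?thesis
      using diff_on_iff by simp
  qed
qed

lemma Ck_on_subset: "Ck_on k S f \<Longrightarrow> T \<subseteq> S \<Longrightarrow> Ck_on k T f"
  by (induction k arbitrary: f) (auto intro: continuous_on_subset differentiable_on_subset)

lemma Ck_on_Suc_imp_Ck_on: "Ck_on (Suc k) S f \<Longrightarrow> Ck_on k S f"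
  by (induction k arbitrary: f) (simp_all add: differentiable_imp_continuous_on)

lemma Ck_on_const: "Ck_on k S (\<lambda>x. c)"
  by (induction k arbitrary: c) auto

lemma Ck_on_ident: "Ck_on k S (\<lambda>x. x)"
  by (cases k) (simp_all add: Ck_on_const)

lemma Ck_on_has_derivative:
  "Ck_on (Suc k) S f \<Longrightarrow> open S \<Longrightarrow> x \<in> S \<Longrightarrow> (f has_derivative frechet_derivative f (at x)) (at x)"
  by (simp add: differentiable_on_eq_differentiable_at frechet_derivative_works)

lemma Ck_on_differentiable:
  "Ck_on k S f \<Longrightarrow> 0 < k \<Longrightarrow> open S \<Longrightarrow> x \<in> S \<Longrightarrow> f differentiable (at x)"
  by (cases k) (auto simp: differentiable_on_eq_differentiable_at)

lemma Ck_on_imp_continuous_on: "Ck_on k S f \<Longrightarrow> continuous_on S f"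
  by (cases k) (simp_all add: differentiable_imp_continuous_on)

lemma Ck_on_surface_imp_continuous_on:
  assumes "Ck_on_surface k \<Gamma> f"
  shows "continuous_on \<Gamma> f"
proof -
  obtain W g where "\<Gamma> \<subseteq> W" and "Ck_on k W g" and g: "\<And>x. x \<in> \<Gamma> \<Longrightarrow> g x = f x"
    using assms unfolding Ck_on_surface_def by blast
  then have "continuous_on \<Gamma> g"
    using Ck_on_imp_continuous_on continuous_on_subset by blast
  then show ?thesis
    using continuous_on_cong[of \<Gamma> \<Gamma> g f] g by simp
qed

lemma Ck_on_SucI:
  assumes "open S" and f': "\<And>x. x \<in> S \<Longrightarrow> (f has_derivative f' x) (at x)"
    and "\<And>b. b \<in> Basis \<Longrightarrow> Ck_on k S (\<lambda>x. f' x b)"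
  shows "Ck_on (Suc k) S f"
proof -
  have "Ck_on k S (\<lambda>x. frechet_derivative f (at x) b) = Ck_on k S (\<lambda>x. f' x b)" for b
    using frechet_derivative_at[OF f'] by (intro Ck_on_cong[OF assms(1)]) auto
  moreover have "f differentiable_on S"
    using f' by (auto simp: differentiable_on_def differentiable_def intro: has_derivative_at_withinI)
  ultimately show ?thesis
    using assms(3) by simp
qed

lemma Ck_on_add:
  assumes "open S"
  shows "Ck_on k S f \<Longrightarrow> Ck_on k S g \<Longrightarrow> Ck_on k S (\<lambda>x. f x + g x)"
proof (induction k arbitrary: f g)
  case 0
  then show ?case by (simp add: continuous_on_add)
next
  case (Suc k)
  show ?case
  proof (rule Ck_on_SucI[OF assms])
    fix x assume "x \<in> S"
    then show "((\<lambda>x. f x + g x) has_derivative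
        (\<lambda>h. frechet_derivative f (at x) h + frechet_derivative g (at x) h)) (at x)"
      using Suc.prems by (intro has_derivative_add Ck_on_has_derivative[OF _ assms])
  next
    fix b :: 'a assume "b \<in> Basis"
    then show "Ck_on k S (\<lambda>x. frechet_derivative f (at x) b + frechet_derivative g (at x) b)"
      using Suc by simp
  qed
qed

lemma Ck_on_scaleR:
  fixes f :: "'a::euclidean_space \<Rightarrow> real"
  assumes "open S"
  shows "Ck_on k S f \<Longrightarrow> Ck_on k S g \<Longrightarrow> Ck_on k S (\<lambda>x. f x *\<^sub>R g x)"
proof (induction k arbitrary: f g)
  case 0
  then show ?case by (simp add: continuous_on_scaleR)
next
  case (Suc k)
  show ?case
  proof (rule Ck_on_SucI[OF assms])
    fix x assume "x \<in> S"
    then show "((\<lambda>x. f x *\<^sub>R g x) has_derivative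
        (\<lambda>h. f x *\<^sub>R frechet_derivative g (at x) h + frechet_derivative f (at x) h *\<^sub>R g x)) (at x)"
      using Suc.prems by (intro has_derivative_scaleR Ck_on_has_derivative[OF _ assms])
  next
    fix b :: 'a assume b: "b \<in> Basis"
    have "Ck_on k S f" "Ck_on k S g"
      using Suc.prems Ck_on_Suc_imp_Ck_on by blast+
    moreover have "Ck_on k S (\<lambda>x. frechet_derivative f (at x) b)" "Ck_on k S (\<lambda>x. frechet_derivative g (at x) b)"
      using Suc.prems b by simp_all
    ultimately show "Ck_on k S (\<lambda>x. f x *\<^sub>R frechet_derivative g (at x) b + frechet_derivative f (at x) b *\<^sub>R g x)"
      using Suc.IH[of f "\<lambda>x. frechet_derivative g (at x) b"] Suc.IH[of "\<lambda>x. frechet_derivative f (at x) b" g]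
      by (intro Ck_on_add[OF assms])
  qed
qed

lemma Ck_on_diff:
  fixes f g :: "'a::euclidean_space \<Rightarrow> 'b::real_normed_vector"
  assumes "open S" and "Ck_on k S f" and "Ck_on k S g"
  shows "Ck_on k S (\<lambda>x. f x - g x)"
  using Ck_on_add[OF assms(1,2) Ck_on_scaleR[OF assms(1) Ck_on_const assms(3)], of "-1"] by simp

lemma Ck_on_sum:
  assumes "open S" and "finite I" and "\<And>i. i \<in> I \<Longrightarrow> Ck_on k S (f i)"
  shows "Ck_on k S (\<lambda>x. \<Sum>i\<in>I. f i x)"
  using assms(2,3)
proof (induction I rule: finite_induct)
  case empty
  then show ?case by (simp add: Ck_on_const)
next
  case (insert i I)
  then show ?case by (simp add: Ck_on_add[OF assms(1)])
qed

lemma Ck_on_grad: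
  assumes "open S" and "Ck_on (Suc k) S f"
  shows "Ck_on k S (grad f)"
proof -
  have "Ck_on k S (\<lambda>x. frechet_derivative f (at x) b *\<^sub>R b)" if "b \<in> Basis" for b
    using assms that by (simp add: Ck_on_scaleR Ck_on_const)
  then have "Ck_on k S (\<lambda>x. \<Sum>b\<in>Basis. frechet_derivative f (at x) b *\<^sub>R b)"
    by (simp add: Ck_on_sum[OF assms(1)])
  moreover have "grad f = (\<lambda>x. \<Sum>b\<in>Basis. frechet_derivative f (at x) b *\<^sub>R b)"
    by (simp add: fun_eq_iff grad_def)
  ultimately show ?thesis
    by simp
qed

lemma frechet_derivative_eq_grad_inner:
  fixes f :: "'a::euclidean_space \<Rightarrow> real"
  assumes "f differentiable (at x)"
  shows "frechet_derivative f (at x) h = grad f x \<bullet> h"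
  using Linear_Algebra.linear_componentwise[OF linear_frechet_derivative[OF assms], of h 1]
  by (simp add: grad_def inner_sum_right mult.commute inner_commute)

lemma has_derivative_grad:
  fixes f :: "'a::euclidean_space \<Rightarrow> real"
  assumes "f differentiable (at x)"
  shows "(f has_derivative (\<lambda>h. grad f x \<bullet> h)) (at x)"
proof -
  have "frechet_derivative f (at x) = (\<lambda>h. grad f x \<bullet> h)"
    by (simp add: fun_eq_iff frechet_derivative_eq_grad_inner[OF assms])
  then show ?thesis
    using assms frechet_derivative_works by metis
qed

section \<open>Second-order bounds\<close>

lemma Ck1_lipschitz_on_segments:
  assumes "open S" and "Ck_on 1 S f" and "compact K" and "K \<subseteq> S"
  obtains L where "L \<ge> 0"
    and "\<And>x y. closed_segment x y \<subseteq> K \<Longrightarrow> norm (f y - f x) \<le> L * norm (y - x)"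
proof -
  define \<Phi> where "\<Phi> x = (\<Sum>b\<in>Basis. norm (frechet_derivative f (at x) b))" for x
  have "continuous_on K \<Phi>"
    using assms(2,4) unfolding \<Phi>_def
    by (intro continuous_intros) (auto intro: continuous_on_subset)
  then have "bounded (\<Phi> ` K)"
    using assms(3) by (intro compact_imp_bounded compact_continuous_image)
  then obtain L0 where L0: "\<And>x. x \<in> K \<Longrightarrow> norm (\<Phi> x) \<le> L0"
    unfolding bounded_iff by blast
  define L where "L = max L0 0"
  have onorm_le: "onorm (frechet_derivative f (at x)) \<le> L" if "x \<in> K" for x
  proof -
    have "onorm (frechet_derivative f (at x)) \<le> \<Phi> x"
      unfolding \<Phi>_def using Ck_on_has_derivative[of 0 S f x] assms(1,2,4) that
      by (intro onorm_componentwise) auto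
    also have "\<dots> \<le> L"
      using L0[OF that] by (simp add: L_def)
    finally show ?thesis .
  qed
  have "norm (f y - f x) \<le> L * norm (y - x)" if seg: "closed_segment x y \<subseteq> K" for x y
  proof (rule differentiable_bound[where S="closed_segment x y" and f'="\<lambda>z. frechet_derivative f (at z)"])
    fix z assume "z \<in> closed_segment x y"
    then have "z \<in> K"
      using seg by blast
    then show "(f has_derivative frechet_derivative f (at z)) (at z within closed_segment x y)"
      and "onorm (frechet_derivative f (at z)) \<le> L"
      using Ck_on_has_derivative[of 0 S f z] assms(1,2,4) onorm_le
      by (auto intro: has_derivative_at_withinI)
  qed auto
  then show ?thesis
    using that[of L] by (simp add: L_def)
qed

lemma Ck2_frechet_derivative_lipschitz_on_segments:
  assumes "open S" and "Ck_on 2 S f" and "compact K" and "K \<subseteq> S"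
  obtains M where "M \<ge> 0"
    and "\<And>x y. closed_segment x y \<subseteq> K \<Longrightarrow>
           onorm (frechet_derivative f (at y) - frechet_derivative f (at x)) \<le> M * norm (y - x)"
proof -
  define D where "D b z = frechet_derivative f (at z) b" for b z
  have "\<exists>L\<ge>0. \<forall>x y. closed_segment x y \<subseteq> K \<longrightarrow> norm (D b y - D b x) \<le> L * norm (y - x)"
    if "b \<in> Basis" for b
  proof -
    have "Ck_on 1 S (D b)"
      using assms(2) that by (simp add: D_def[abs_def] numeral_2_eq_2)
    then obtain L where "L \<ge> 0" "\<And>x y. closed_segment x y \<subseteq> K \<Longrightarrow> norm (D b y - D b x) \<le> L * norm (y - x)"
      using Ck1_lipschitz_on_segments[OF assms(1) _ assms(3,4)] by blast
    then show ?thesis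
      by blast
  qed
  then obtain L where L: "\<And>b. b \<in> Basis \<Longrightarrow> L b \<ge> 0"
    "\<And>b x y. b \<in> Basis \<Longrightarrow> closed_segment x y \<subseteq> K \<Longrightarrow> norm (D b y - D b x) \<le> L b * norm (y - x)"
    by (metis (no_types))
  have "onorm (frechet_derivative f (at y) - frechet_derivative f (at x)) \<le> (\<Sum>b\<in>Basis. L b) * norm (y - x)"
    if seg: "closed_segment x y \<subseteq> K" for x y
  proof -
    have "x \<in> K" "y \<in> K"
      using seg by auto
    then have bl: "bounded_linear (frechet_derivative f (at y))" "bounded_linear (frechet_derivative f (at x))"
      using Ck_on_has_derivative[of 1 S f] assms(1,2,4) has_derivative_bounded_linear
      by (auto simp: numeral_2_eq_2)
    have "onorm (frechet_derivative f (at y) - frechet_derivative f (at x))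
        \<le> (\<Sum>b\<in>Basis. norm ((frechet_derivative f (at y) - frechet_derivative f (at x)) b))"
      using bounded_linear_sub[OF bl] by (intro onorm_componentwise) (simp add: fun_diff_def)
    also have "\<dots> = (\<Sum>b\<in>Basis. norm (D b y - D b x))"
      by (simp add: D_def)
    also have "\<dots> \<le> (\<Sum>b\<in>Basis. L b * norm (y - x))"
      using L(2) seg by (intro sum_mono) blast
    finally show ?thesis
      by (simp add: sum_distrib_right)
  qed
  moreover have "(\<Sum>b\<in>Basis. L b) \<ge> 0"
    using L(1) by (simp add: sum_nonneg)
  ultimately show ?thesis
    using that by blast
qed

lemma Ck2_taylor_remainder_on_segments:
  fixes f :: "'a::euclidean_space \<Rightarrow> 'b::real_normed_vector"
  assumes "open S" and "Ck_on 2 S f" and "compact K" and "K \<subseteq> S"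
  obtains M where
    "\<And>x y. closed_segment x y \<subseteq> K \<Longrightarrow>
       norm (f y - f x - frechet_derivative f (at x) (y - x)) \<le> M * (norm (y - x))\<^sup>2"
proof -
  obtain M where "M \<ge> 0" and M: "\<And>x z. closed_segment x z \<subseteq> K \<Longrightarrow>
      onorm (frechet_derivative f (at z) - frechet_derivative f (at x)) \<le> M * norm (z - x)"
    using Ck2_frechet_derivative_lipschitz_on_segments[OF assms] by blast
  have "norm (f y - f x - frechet_derivative f (at x) (y - x)) \<le> norm (y - x) * (M * norm (y - x))"
    if seg: "closed_segment x y \<subseteq> K" for x y
  proof (rule differentiable_bound_linearization[where S="closed_segment x y"])
    show "x + t *\<^sub>R (y - x) \<in> closed_segment x y" if "t \<in> {0..1}" for t
      using that by (auto simp: in_segment algebra_simps)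
    fix z assume z: "z \<in> closed_segment x y"
    then show "(f has_derivative frechet_derivative f (at z)) (at z within closed_segment x y)"
      using seg Ck_on_has_derivative[of 1 S f z] assms(1,2,4)
      by (auto simp: numeral_2_eq_2 intro: has_derivative_at_withinI)
    have "closed_segment x z \<subseteq> K"
      using seg z by (meson closed_segment_subset convex_closed_segment ends_in_segment(1) subset_trans)
    moreover have "norm (z - x) \<le> norm (y - x)"
      using z by (metis dist_commute dist_in_closed_segment(1) dist_norm)
    ultimately show "onorm (frechet_derivative f (at z) - frechet_derivative f (at x)) \<le> M * norm (y - x)"
      using M \<open>M \<ge> 0\<close> by (meson mult_left_mono order.trans)
  qed simp
  then show ?thesis
    by (intro that) (simp add: power2_eq_square mult.left_commute)
qed

lemma Ck2_bound_by_infdist_squared: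
  fixes G :: "'a::euclidean_space \<Rightarrow> 'b::real_normed_vector"
  assumes "open U" and "Ck_on 2 U G" and "compact \<Gamma>" and "\<Gamma> \<noteq> {}" and "\<Gamma> \<subseteq> U"
    and zero: "\<And>q. q \<in> \<Gamma> \<Longrightarrow> G q = 0"
    and deriv_zero: "\<And>q. q \<in> \<Gamma> \<Longrightarrow> frechet_derivative G (at q) = (\<lambda>h. 0)"
    and "bounded (G ` U)"
  obtains C where "\<And>x. x \<in> U \<Longrightarrow> norm (G x) \<le> C * (infdist x \<Gamma>)\<^sup>2"
proof -
  obtain r where "r > 0" and r: "(\<Union>a\<in>\<Gamma>. cball a r) \<subseteq> U"
    using compact_subset_open_imp_cball_epsilon_subset[OF assms(3,1,5)] by blast
  obtain M where M: "\<And>x y. closed_segment x y \<subseteq> (\<Union>a\<in>\<Gamma>. cball a r) \<Longrightarrow>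
      norm (G y - G x - frechet_derivative G (at x) (y - x)) \<le> M * (norm (y - x))\<^sup>2"
    using Ck2_taylor_remainder_on_segments[OF assms(1,2) compact_minkowski_sum_cball[OF assms(3)] r] by blast
  obtain B where B: "\<And>x. x \<in> U \<Longrightarrow> norm (G x) \<le> B"
    using assms(8) unfolding bounded_iff by blast
  define C where "C = max M 0 + max B 0 / r\<^sup>2"
  have "0 \<le> max B 0 / r\<^sup>2"
    by simp
  then have C: "M \<le> C" "max B 0 / r\<^sup>2 \<le> C"
    unfolding C_def by linarith+
  have "norm (G x) \<le> C * (infdist x \<Gamma>)\<^sup>2" if "x \<in> U" for x
  proof -
    obtain a where a: "a \<in> \<Gamma>" "infdist x \<Gamma> = dist x a"
      using infdist_attains_inf[OF compact_imp_closed[OF assms(3)] assms(4)] by blast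
    define d where "d = infdist x \<Gamma>"
    show ?thesis
    proof (cases "d \<le> r")
      case True
      then have "closed_segment a x \<subseteq> cball a r"
        using a \<open>r > 0\<close> by (intro closed_segment_subset) (auto simp: d_def dist_commute)
      then have "closed_segment a x \<subseteq> (\<Union>a\<in>\<Gamma>. cball a r)"
        using a(1) by blast
      from M[OF this] have "norm (G x) \<le> M * d\<^sup>2"
        using zero[OF a(1)] deriv_zero[OF a(1)] a(2) by (simp add: d_def dist_norm norm_minus_commute)
      also have "\<dots> \<le> C * d\<^sup>2"
        using C by (simp add: mult_right_mono)
      finally show ?thesis
        by (simp add: d_def)
    next
      case False
      then have "1 \<le> d\<^sup>2 / r\<^sup>2"
        using \<open>r > 0\<close> by (simp add: power_mono)
      then have "max B 0 \<le> max B 0 / r\<^sup>2 * d\<^sup>2"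
        using mult_left_mono[of 1 "d\<^sup>2 / r\<^sup>2" "max B 0"] by simp
      also have "\<dots> \<le> C * d\<^sup>2"
        using C(2) by (rule mult_right_mono) simp
      finally show ?thesis
        using B[OF that] by (simp add: d_def)
    qed
  qed
  then show ?thesis
    by (rule that)
qed

section \<open>Derivatives along curves and of nearest-point maps\<close>

lemma has_derivative_locally_constant:
  assumes "(f has_derivative f') (at x)" and "open S" and "x \<in> S" and "\<And>y. y \<in> S \<Longrightarrow> f y = f x"
  shows "f' = (\<lambda>h. 0)"
proof -
  have "(f has_derivative (\<lambda>h. 0)) (at x)"
    using has_derivative_transform_within_open[OF has_derivative_const assms(2,3)] assms(4) by metis
  then show ?thesis
    using has_derivative_unique[OF assms(1)] by blast
qed

lemma frechet_derivative_zero_along_curve: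
  assumes "f differentiable (at (c t))" and "(c has_vector_derivative v) (at t)"
    and "open T" and "t \<in> T" and "\<And>s. s \<in> T \<Longrightarrow> f (c s) = f (c t)"
  shows "frechet_derivative f (at (c t)) v = 0"
proof -
  have "((f \<circ> c) has_derivative frechet_derivative f (at (c t)) \<circ> (\<lambda>s. s *\<^sub>R v)) (at t)"
    using assms(1,2) by (intro diff_chain_at) (simp_all add: has_vector_derivative_def frechet_derivative_works)
  from has_derivative_locally_constant[OF this assms(3,4)] assms(5)
  have "frechet_derivative f (at (c t)) \<circ> (\<lambda>s. s *\<^sub>R v) = (\<lambda>h. 0)"
    by simp
  from fun_cong[OF this, of 1] show ?thesis
    by simp
qed

lemma norm_vector_derivative_le:
  fixes g :: "real \<Rightarrow> 'a::real_normed_vector"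
  assumes "(g has_vector_derivative v) (at 0)" and "g 0 = 0"
    and "\<forall>\<^sub>F t in at_right 0. norm (g t) \<le> c * t"
  shows "norm v \<le> c"
proof -
  have "((\<lambda>t. (g t - g 0 - t *\<^sub>R v) /\<^sub>R norm t) \<longlongrightarrow> 0) (at_right 0)"
    using assms(1) unfolding has_vector_derivative_def has_derivative_at_within
    by (auto intro: tendsto_mono[OF at_le])
  moreover have "\<forall>\<^sub>F t in at_right 0. (g t - g 0 - t *\<^sub>R v) /\<^sub>R norm t = g t /\<^sub>R t - v"
    using eventually_at_right_less[of 0] by eventually_elim (simp add: assms(2) scaleR_diff_right)
  ultimately have "((\<lambda>t. g t /\<^sub>R t - v) \<longlongrightarrow> 0) (at_right 0)"
    by (rule Lim_transform_eventually)
  from tendsto_add[OF this tendsto_const[of v]]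
  have "((\<lambda>t. norm (g t /\<^sub>R t)) \<longlongrightarrow> norm v) (at_right 0)"
    by (intro tendsto_norm) simp
  moreover have "\<forall>\<^sub>F t in at_right 0. norm (g t /\<^sub>R t) \<le> c"
    using assms(3) eventually_at_right_less[of 0]
    by eventually_elim (simp add: field_simps)
  ultimately show ?thesis
    by (rule tendsto_upperbound) simp
qed

lemma frechet_derivative_nearest_point_normal:
  fixes H :: "'a::euclidean_space \<Rightarrow> 'a" and \<phi> :: "'a \<Rightarrow> real"
  assumes "H differentiable (at q)" and "H q = q" and "(\<phi> has_derivative (\<lambda>h. n \<bullet> h)) (at q)"
    and "open S" and "q \<in> S" and nearest: "\<And>y. y \<in> S \<Longrightarrow> \<phi> (H y) = 0 \<and> dist y (H y) \<le> dist y q"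
  shows "frechet_derivative H (at q) n = 0"
proof -
  define DH where "DH = frechet_derivative H (at q)"
  have H': "(H has_derivative DH) (at q)"
    using assms(1) frechet_derivative_works DH_def by blast
  have "((\<phi> \<circ> H) has_derivative (\<lambda>h. n \<bullet> DH h)) (at q)"
    using diff_chain_at[OF H'] assms(2,3) by (simp add: o_def)
  from has_derivative_locally_constant[OF this assms(4,5)] nearest assms(5)
  have DH_tangent: "n \<bullet> DH n = 0"
    by (metis (no_types, lifting) o_apply)
  define g where "g t = (q + t *\<^sub>R n) - H (q + t *\<^sub>R n)" for t
  have line: "((\<lambda>t. q + t *\<^sub>R n) has_derivative (\<lambda>t. t *\<^sub>R n)) (at 0)"
    by (auto intro!: derivative_eq_intros)
  have "(g has_derivative (\<lambda>t. t *\<^sub>R n - DH (t *\<^sub>R n))) (at 0)"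
    unfolding g_def using diff_chain_at[OF line] H'
    by (intro has_derivative_diff[OF line]) (simp add: o_def)
  then have "(g has_vector_derivative (n - DH n)) (at 0)"
    using linear_scale[OF has_derivative_linear[OF H']]
    by (simp add: has_vector_derivative_def scaleR_diff_right)
  moreover have "g 0 = 0"
    using assms(2) by (simp add: g_def)
  moreover have "\<forall>\<^sub>F t in at_right 0. q + t *\<^sub>R n \<in> S"
    using assms(4,5) by (intro topological_tendstoD) (auto intro!: tendsto_eq_intros)
  then have "\<forall>\<^sub>F t in at_right 0. norm (g t) \<le> norm n * t"
    using eventually_at_right_less[of 0]
  proof eventually_elim
    case (elim t)
    then have "dist (q + t *\<^sub>R n) (H (q + t *\<^sub>R n)) \<le> dist (q + t *\<^sub>R n) q"
      using nearest by blast
    with elim show ?case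
      by (simp add: g_def dist_norm mult.commute)
  qed
  ultimately have "norm (n - DH n) \<le> norm n"
    by (rule norm_vector_derivative_le)
  moreover have "(norm (n - DH n))\<^sup>2 = (norm n)\<^sup>2 + (norm (DH n))\<^sup>2"
    using DH_tangent
    by (simp add: power2_norm_eq_inner inner_diff_left inner_diff_right inner_commute)
  ultimately have "(norm n)\<^sup>2 + (norm (DH n))\<^sup>2 \<le> (norm n)\<^sup>2"
    by (metis norm_ge_zero power_mono)
  then show ?thesis
    by (simp add: DH_def)
qed

section \<open>Tangent vectors of level sets\<close>

lemma first_order_near_tangent_line:
  fixes \<phi> :: "'a::euclidean_space \<Rightarrow> real"
  assumes "open S" and "q \<in> S" and "(\<phi> has_derivative (\<lambda>h. n \<bullet> h)) (at q)"
    and "\<phi> q = 0" and "n \<noteq> 0" and "n \<bullet> v = 0" and "\<epsilon> > 0"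
  obtains \<eta> where "\<eta> > 0"
    and "\<And>t \<sigma>. \<bar>t\<bar> < \<eta> \<Longrightarrow> \<bar>\<sigma>\<bar> \<le> \<epsilon> * \<bar>t\<bar> / norm n \<Longrightarrow>
           q + t *\<^sub>R v + \<sigma> *\<^sub>R n \<in> S \<and>
           \<bar>\<phi> (q + t *\<^sub>R v + \<sigma> *\<^sub>R n) - \<sigma> * (norm n)\<^sup>2\<bar> \<le> \<epsilon> * norm n * \<bar>t\<bar> / 2"
proof -
  define L where "L = norm v + \<epsilon>"
  define \<kappa> where "\<kappa> = \<epsilon> * norm n / (2 * L)"
  have "L > 0" "\<kappa> > 0"
    using assms(5,7) by (simp_all add: L_def \<kappa>_def add_nonneg_pos)
  obtain d where "d > 0" and d: "\<And>y. norm (y - q) < d \<Longrightarrow> \<bar>\<phi> y - n \<bullet> (y - q)\<bar> \<le> \<kappa> * norm (y - q)"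
    using assms(3,4) \<open>\<kappa> > 0\<close> unfolding has_derivative_at_alt by force
  obtain \<rho> where "\<rho> > 0" and "ball q \<rho> \<subseteq> S"
    using assms(1,2) open_contains_ball by blast
  define \<eta> where "\<eta> = min d \<rho> / L"
  have "q + t *\<^sub>R v + \<sigma> *\<^sub>R n \<in> S \<and>
      \<bar>\<phi> (q + t *\<^sub>R v + \<sigma> *\<^sub>R n) - \<sigma> * (norm n)\<^sup>2\<bar> \<le> \<epsilon> * norm n * \<bar>t\<bar> / 2"
    if t: "\<bar>t\<bar> < \<eta>" and \<sigma>: "\<bar>\<sigma>\<bar> \<le> \<epsilon> * \<bar>t\<bar> / norm n" for t \<sigma>
  proof -
    define y where "y = q + t *\<^sub>R v + \<sigma> *\<^sub>R n"
    have "norm (y - q) \<le> \<bar>t\<bar> * norm v + \<bar>\<sigma>\<bar> * norm n"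
      using norm_triangle_ineq[of "t *\<^sub>R v" "\<sigma> *\<^sub>R n"] by (simp add: y_def)
    also have "\<dots> \<le> \<bar>t\<bar> * L"
      using \<sigma> assms(5) by (simp add: L_def pos_le_divide_eq algebra_simps)
    finally have "norm (y - q) \<le> \<bar>t\<bar> * L" .
    moreover have "\<bar>t\<bar> * L < min d \<rho>"
      using t \<open>L > 0\<close> by (simp add: \<eta>_def pos_less_divide_eq)
    ultimately have "norm (y - q) < d" and "norm (y - q) < \<rho>"
      by linarith+
    then have "y \<in> S"
      using \<open>ball q \<rho> \<subseteq> S\<close> by (auto simp: dist_norm norm_minus_commute)
    have "\<bar>\<phi> y - n \<bullet> (y - q)\<bar> \<le> \<kappa> * norm (y - q)"
      using d \<open>norm (y - q) < d\<close> by blast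
    also have "\<dots> \<le> \<kappa> * (\<bar>t\<bar> * L)"
      using \<open>norm (y - q) \<le> \<bar>t\<bar> * L\<close> \<open>\<kappa> > 0\<close> by simp
    finally have "\<bar>\<phi> y - n \<bullet> (y - q)\<bar> \<le> \<kappa> * (\<bar>t\<bar> * L)" .
    moreover have "n \<bullet> (y - q) = \<sigma> * (norm n)\<^sup>2"
      using assms(6) by (simp add: y_def inner_add_right power2_norm_eq_inner)
    moreover have "\<kappa> * (\<bar>t\<bar> * L) = \<epsilon> * norm n * \<bar>t\<bar> / 2"
      using \<open>L > 0\<close> by (simp add: \<kappa>_def)
    ultimately show ?thesis
      using \<open>y \<in> S\<close> by (simp add: y_def)
  qed
  moreover have "\<eta> > 0"
    using \<open>d > 0\<close> \<open>\<rho> > 0\<close> \<open>L > 0\<close> by (simp add: \<eta>_def)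
  ultimately show ?thesis
    using that by blast
qed

lemma zero_near_tangent_line:
  fixes \<phi> :: "'a::euclidean_space \<Rightarrow> real"
  assumes "open S" and "q \<in> S" and "continuous_on S \<phi>" and "(\<phi> has_derivative (\<lambda>h. n \<bullet> h)) (at q)"
    and "\<phi> q = 0" and "n \<noteq> 0" and "n \<bullet> v = 0" and "\<epsilon> > 0"
  obtains \<eta> where "\<eta> > 0" and "\<And>t. \<bar>t\<bar> < \<eta> \<Longrightarrow> \<exists>z\<in>S. \<phi> z = 0 \<and> dist (q + t *\<^sub>R v) z \<le> \<epsilon> * \<bar>t\<bar>"
proof -
  obtain \<eta> where "\<eta> > 0" and \<eta>: "\<And>t \<sigma>. \<bar>t\<bar> < \<eta> \<Longrightarrow> \<bar>\<sigma>\<bar> \<le> \<epsilon> * \<bar>t\<bar> / norm n \<Longrightarrow>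
      q + t *\<^sub>R v + \<sigma> *\<^sub>R n \<in> S \<and>
      \<bar>\<phi> (q + t *\<^sub>R v + \<sigma> *\<^sub>R n) - \<sigma> * (norm n)\<^sup>2\<bar> \<le> \<epsilon> * norm n * \<bar>t\<bar> / 2"
    using first_order_near_tangent_line[OF assms(1,2,4-8)] by blast
  have "\<exists>z\<in>S. \<phi> z = 0 \<and> dist (q + t *\<^sub>R v) z \<le> \<epsilon> * \<bar>t\<bar>" if t: "\<bar>t\<bar> < \<eta>" for t
  proof -
    define a where "a = \<epsilon> * \<bar>t\<bar> / norm n"
    define y where "y \<sigma> = q + t *\<^sub>R v + \<sigma> *\<^sub>R n" for \<sigma>
    have "a \<ge> 0"
      using assms(8) by (simp add: a_def)
    have "a * (norm n)\<^sup>2 = \<epsilon> * norm n * \<bar>t\<bar>"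
      using assms(6) by (simp add: a_def power2_eq_square)
    then have "\<phi> (y (-a)) \<le> 0" and "0 \<le> \<phi> (y a)"
      using \<eta>[OF t, of a] \<eta>[OF t, of "-a"] \<open>a \<ge> 0\<close> unfolding y_def a_def[symmetric] abs_le_iff
      by auto
    moreover have "continuous_on {-a..a} (\<lambda>\<sigma>. \<phi> (y \<sigma>))"
      using \<eta>[OF t] unfolding y_def a_def[symmetric]
      by (intro continuous_on_compose2[OF assms(3)] continuous_intros) auto
    ultimately obtain \<sigma> where "-a \<le> \<sigma>" and "\<sigma> \<le> a" and "\<phi> (y \<sigma>) = 0"
      using IVT'[of "\<lambda>\<sigma>. \<phi> (y \<sigma>)" "-a" 0 a] \<open>a \<ge> 0\<close> by auto
    then have \<sigma>: "\<bar>\<sigma>\<bar> \<le> a" "\<phi> (y \<sigma>) = 0"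
      by auto
    have "dist (q + t *\<^sub>R v) (y \<sigma>) = \<bar>\<sigma>\<bar> * norm n"
      by (simp add: y_def dist_norm)
    also have "\<dots> \<le> \<epsilon> * \<bar>t\<bar>"
      using \<sigma>(1) assms(6) by (simp add: a_def pos_le_divide_eq)
    finally show ?thesis
      using \<sigma> \<eta>[OF t] by (auto simp: y_def a_def)
  qed
  then show ?thesis
    using that \<open>\<eta> > 0\<close> by blast
qed

lemma tangent_space_level_set:
  fixes \<phi> :: "'a::euclidean_space \<Rightarrow> real"
  assumes "closed \<Gamma>" and "q \<in> \<Gamma>" and "open S" and "q \<in> S" and "continuous_on S \<phi>"
    and level: "\<And>z. z \<in> S \<Longrightarrow> \<phi> z = 0 \<Longrightarrow> z \<in> \<Gamma>"
    and "(\<phi> has_derivative (\<lambda>h. n \<bullet> h)) (at q)" and "\<phi> q = 0" and "n \<noteq> 0" and "n \<bullet> v = 0"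
  shows "v \<in> tangent_space \<Gamma> q"
proof -
  define c where "c t = (SOME z. z \<in> \<Gamma> \<and> infdist (q + t *\<^sub>R v) \<Gamma> = dist (q + t *\<^sub>R v) z)" for t
  have c: "c t \<in> \<Gamma> \<and> infdist (q + t *\<^sub>R v) \<Gamma> = dist (q + t *\<^sub>R v) (c t)" for t
  proof -
    obtain z where "z \<in> \<Gamma>" "infdist (q + t *\<^sub>R v) \<Gamma> = dist (q + t *\<^sub>R v) z"
      using infdist_attains_inf[OF assms(1)] assms(2) by blast
    then show ?thesis
      unfolding c_def
      using someI[of "\<lambda>z. z \<in> \<Gamma> \<and> infdist (q + t *\<^sub>R v) \<Gamma> = dist (q + t *\<^sub>R v) z" z] by blast
  qed
  have "c 0 = q"
    using c[of 0] assms(2) by simp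
  have "\<exists>d>0. \<forall>t. norm (t - 0) < d \<longrightarrow> norm (c t - c 0 - (t - 0) *\<^sub>R v) \<le> e * norm (t - 0)"
    if "e > 0" for e
  proof -
    obtain \<eta> where "\<eta> > 0" and \<eta>: "\<And>t. \<bar>t\<bar> < \<eta> \<Longrightarrow> \<exists>z\<in>S. \<phi> z = 0 \<and> dist (q + t *\<^sub>R v) z \<le> e * \<bar>t\<bar>"
      using zero_near_tangent_line[OF assms(3,4,5,7,8,9,10) \<open>e > 0\<close>] by blast
    have "norm (c t - c 0 - t *\<^sub>R v) \<le> e * \<bar>t\<bar>" if t: "\<bar>t\<bar> < \<eta>" for t
    proof -
      obtain z where "z \<in> \<Gamma>" "dist (q + t *\<^sub>R v) z \<le> e * \<bar>t\<bar>"
        using \<eta>[OF t] level by blast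
      then have "infdist (q + t *\<^sub>R v) \<Gamma> \<le> e * \<bar>t\<bar>"
        using infdist_le[of z \<Gamma> "q + t *\<^sub>R v"] by linarith
      then show ?thesis
        using c[of t] \<open>c 0 = q\<close> by (simp add: dist_norm norm_minus_commute algebra_simps)
    qed
    then show ?thesis
      using \<open>\<eta> > 0\<close> by (intro exI[of _ \<eta>]) simp
  qed
  then have "(c has_vector_derivative v) (at 0)"
    unfolding has_vector_derivative_def has_derivative_at_alt
    using bounded_linear_scaleR_left by blast
  then show ?thesis
    unfolding tangent_space_def using c \<open>c 0 = q\<close> by blast
qed

section \<open>Linear algebra\<close>

lemma linear_symmetric_if_symmetric_on_Basis:
  fixes f :: "'a::euclidean_space \<Rightarrow> 'a"
  assumes "linear f" and "\<And>i j. i \<in> Basis \<Longrightarrow> j \<in> Basis \<Longrightarrow> i \<bullet> f j = j \<bullet> f i"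
  shows "x \<bullet> f y = y \<bullet> f x"
proof -
  have "linear (\<lambda>y. x \<bullet> f y)" for x
    using linear_compose[OF assms(1) bounded_linear.linear[OF bounded_linear_inner_right]] by (simp add: o_def)
  moreover have "linear (\<lambda>x. x \<bullet> z)" for z :: 'a
    using bounded_linear.linear[OF bounded_linear_inner_left] .
  ultimately have "bilinear (\<lambda>x y. x \<bullet> f y)" and "bilinear (\<lambda>x y. y \<bullet> f x)"
    by (simp_all add: bilinear_def)
  then have "(\<lambda>x y. x \<bullet> f y) = (\<lambda>x y. y \<bullet> f x)"
    by (rule bilinear_eq_stdbasis) (simp add: assms(2))
  from fun_cong[OF fun_cong[OF this, of x], of y] show ?thesis
    by simp
qed

lemma symmetric_coercive_if_coercive_on_orthogonal_complement:
  fixes f :: "'a::euclidean_space \<Rightarrow> 'a"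
  assumes "linear f" and sym: "\<And>x y. x \<bullet> f y = y \<bullet> f x" and "norm v = 1" and "f v = v"
    and coercive: "\<And>\<xi>. v \<bullet> \<xi> = 0 \<Longrightarrow> \<alpha> * (norm \<xi>)\<^sup>2 \<le> \<xi> \<bullet> f \<xi>"
  shows "min \<alpha> 1 * (norm h)\<^sup>2 \<le> f h \<bullet> h"
proof -
  define c where "c = h \<bullet> v"
  define \<xi> where "\<xi> = h - c *\<^sub>R v"
  have "v \<bullet> v = 1"
    using assms(3) by (simp add: power2_norm_eq_inner[symmetric])
  then have "v \<bullet> \<xi> = 0"
    by (simp add: \<xi>_def c_def inner_diff_right inner_commute)
  have h: "h = \<xi> + c *\<^sub>R v"
    by (simp add: \<xi>_def)
  have "f \<xi> \<bullet> v = 0"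
    using sym[of v \<xi>] \<open>v \<bullet> \<xi> = 0\<close> assms(4) by (simp add: inner_commute)
  then have quadratic_form: "f h \<bullet> h = \<xi> \<bullet> f \<xi> + c\<^sup>2"
    using \<open>v \<bullet> v = 1\<close> \<open>v \<bullet> \<xi> = 0\<close> assms(4) unfolding h
    by (simp add: linear_add[OF assms(1)] linear_scale[OF assms(1)] inner_add_left inner_add_right
        inner_commute power2_eq_square)
  have norm_h: "(norm h)\<^sup>2 = (norm \<xi>)\<^sup>2 + c\<^sup>2"
    using \<open>v \<bullet> \<xi> = 0\<close> assms(3) unfolding h
    by (simp add: norm_add_Pythagorean orthogonal_def inner_commute)
  have "min \<alpha> 1 * (norm \<xi>)\<^sup>2 \<le> \<xi> \<bullet> f \<xi>" "min \<alpha> 1 * c\<^sup>2 \<le> c\<^sup>2"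
    using coercive[OF \<open>v \<bullet> \<xi> = 0\<close>] mult_right_mono[of "min \<alpha> 1" \<alpha> "(norm \<xi>)\<^sup>2"]
      mult_right_mono[of "min \<alpha> 1" 1 "c\<^sup>2"] by simp_all
  then show ?thesis
    unfolding quadratic_form norm_h by (simp add: distrib_left)
qed

lemma uniformly_bounded_linear_family:
  fixes L :: "'a::euclidean_space \<Rightarrow> 'b::euclidean_space \<Rightarrow> 'b"
  assumes "compact K" and "\<And>x. x \<in> K \<Longrightarrow> linear (L x)"
    and "\<And>i j. i \<in> Basis \<Longrightarrow> j \<in> Basis \<Longrightarrow> continuous_on K (\<lambda>x. i \<bullet> L x j)"
  obtains B where "B > 0" and "\<And>x h. x \<in> K \<Longrightarrow> norm (L x h) \<le> B * norm h"
proof -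
  define E where "E x = (\<Sum>j\<in>Basis. \<Sum>i\<in>Basis. \<bar>L x j \<bullet> i\<bar>)" for x
  have "continuous_on K E"
    unfolding E_def using assms(3) by (intro continuous_on_sum continuous_on_rabs) (simp add: inner_commute)
  then have "bounded (E ` K)"
    using assms(1) by (intro compact_imp_bounded compact_continuous_image)
  then obtain B where "B > 0" and B: "\<And>x. x \<in> K \<Longrightarrow> norm (E x) \<le> B"
    unfolding bounded_pos by blast
  have "norm (L x h) \<le> B * norm h" if "x \<in> K" for x h
  proof -
    have bl: "bounded_linear (L x)"
      using assms(2)[OF that] by (simp add: linear_conv_bounded_linear)
    have "onorm (L x) \<le> (\<Sum>j\<in>Basis. norm (L x j))"
      by (rule onorm_componentwise[OF bl])
    also have "\<dots> \<le> E x"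
      unfolding E_def using norm_le_l1 by (rule sum_mono)
    also have "\<dots> \<le> B"
      using B[OF that] by simp
    finally show ?thesis
      using onorm[OF bl, of h] by (meson mult_right_mono norm_ge_zero order_trans)
  qed
  then show ?thesis
    using that \<open>B > 0\<close> by blast
qed

lemma linear_eq_zero_if_zero_on_vector_and_orthogonal_complement:
  fixes L :: "'a::real_inner \<Rightarrow> 'b::real_vector"
  assumes "linear L" and "n \<noteq> 0" and "L n = 0" and "\<And>v. n \<bullet> v = 0 \<Longrightarrow> L v = 0"
  shows "L h = 0"
proof -
  define a where "a = (n \<bullet> h) / (n \<bullet> n)"
  have "n \<bullet> (h - a *\<^sub>R n) = 0"
    using assms(2) by (simp add: a_def inner_diff_right)
  then have "L (h - a *\<^sub>R n) = 0"
    by (rule assms(4))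
  then show ?thesis
    using assms(3) by (simp add: linear_diff[OF assms(1)] linear_scale[OF assms(1)])
qed

section \<open>The flow projection\<close>

lemma norm_displacement_le_bounded_velocity:
  fixes g :: "real \<Rightarrow> 'a::real_normed_vector"
  assumes "convex T" and "\<And>t. t \<in> T \<Longrightarrow> (g has_vector_derivative g' t) (at t)"
    and "\<And>t. t \<in> T \<Longrightarrow> norm (g' t) \<le> V" and "a \<in> T" and "b \<in> T"
  shows "norm (g b - g a) \<le> V * \<bar>b - a\<bar>"
proof -
  have "norm (g b - g a) \<le> V * norm (b - a)"
  proof (rule differentiable_bound[where f'="\<lambda>t u. u *\<^sub>R g' t"])
    fix t assume "t \<in> T"
    show "(g has_derivative (\<lambda>u. u *\<^sub>R g' t)) (at t within T)"
      using assms(2)[OF \<open>t \<in> T\<close>] by (simp add: has_vector_derivative_def has_derivative_at_withinI)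
    show "onorm (\<lambda>u. u *\<^sub>R g' t) \<le> V"
      using assms(3)[OF \<open>t \<in> T\<close>] by (intro onorm_le) (simp add: mult_left_mono mult.commute[of V])
  qed (use assms in auto)
  then show ?thesis
    by simp
qed

locale flow_projection =
  fixes \<Gamma> \<Omega> :: "'a::euclidean_space set" and \<nu> :: "'a \<Rightarrow> 'a" and A :: "'a \<Rightarrow> 'a \<Rightarrow> 'a"
    and \<alpha> c0 \<delta> :: real and \<phi> :: "'a \<Rightarrow> real" and \<gamma> :: "'a \<Rightarrow> real \<Rightarrow> 'a"
    and p :: "'a \<Rightarrow> 'a"
  assumes \<Gamma>_compact: "compact \<Gamma>" and \<Gamma>_ne: "\<Gamma> \<noteq> {}"
    and \<Omega>_open: "open \<Omega>" and \<Gamma>_sub: "\<Gamma> \<subseteq> \<Omega>"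
    and d_smooth: "smooth_on \<Omega> (signed_dist \<Gamma>)"
    and closest: "\<forall>x\<in>\<Omega>. hat_p \<Gamma> x \<in> \<Gamma> \<and> dist x (hat_p \<Gamma> x) = infdist x \<Gamma>"
    and normal: "\<forall>x\<in>\<Gamma>. is_unit_outer_normal \<Gamma> x (\<nu> x)"
    and A_linear: "\<forall>x\<in>\<Gamma>. linear (A x)"
    and A_C2: "\<forall>i\<in>Basis. \<forall>j\<in>Basis. Ck_on_surface 2 \<Gamma> (\<lambda>x. i \<bullet> A x j)"
    and A_sym: "\<forall>x\<in>\<Gamma>. \<forall>i\<in>Basis. \<forall>j\<in>Basis. i \<bullet> A x j = j \<bullet> A x i"
    and \<alpha>_pos: "\<alpha> > 0"
    and A_ell: "\<forall>x\<in>\<Gamma>. \<forall>\<xi>\<in>tangent_space \<Gamma> x. \<xi> \<bullet> A x \<xi> \<ge> \<alpha> * (norm \<xi>)\<^sup>2"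
    and A_nu: "\<forall>x\<in>\<Gamma>. A x (\<nu> x) = \<nu> x"
    and \<phi>_smooth: "\<exists>W. open W \<and> closure \<Omega> \<subseteq> W \<and> smooth_on W \<phi>"
    and \<Gamma>_level: "\<Gamma> = {x\<in>closure \<Omega>. \<phi> x = 0}"
    and c0_pos: "0 < c0"
    and grad_lower: "\<forall>x\<in>closure \<Omega>. c0 \<le> norm (grad \<phi> x)"
    and \<delta>_pos: "\<delta> > 0"
    and ode: "\<forall>q\<in>\<Gamma>. \<gamma> q 0 = q \<and> (\<forall>s\<in>{-\<delta><..<\<delta>}. \<gamma> q s \<in> closure \<Omega> \<and>
                 (\<gamma> q has_vector_derivative flow_field A \<phi> q (\<gamma> q s)) (at s))"
    and F_bij: "bij_betw (\<lambda>(q, s). \<gamma> q s) (\<Gamma> \<times> {-\<delta><..<\<delta>}) {x\<in>\<Omega>. \<bar>\<phi> x\<bar> < \<delta>}"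
    and p_inv: "\<forall>x\<in>{x\<in>\<Omega>. \<bar>\<phi> x\<bar> < \<delta>}. p x \<in> \<Gamma> \<and> \<gamma> (p x) (\<phi> x) = x"
    and p_C2: "Ck_on 2 {x\<in>\<Omega>. \<bar>\<phi> x\<bar> < \<delta>} p"
begin

abbreviation tube :: "'a set" where
  "tube \<equiv> {x\<in>\<Omega>. \<bar>\<phi> x\<bar> < \<delta>}"

lemma Gamma_memD:
  assumes "q \<in> \<Gamma>"
  shows "q \<in> \<Omega>" and "q \<in> closure \<Omega>" and "\<phi> q = 0"
  using assms \<Gamma>_sub \<Gamma>_level by auto

lemma phi_has_derivative:
  assumes "x \<in> closure \<Omega>"
  shows "(\<phi> has_derivative (\<lambda>h. grad \<phi> x \<bullet> h)) (at x)"
proof -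
  obtain W where "open W" "closure \<Omega> \<subseteq> W" "Ck_on 1 W \<phi>"
    using \<phi>_smooth unfolding smooth_on_def by blast
  then have "\<phi> differentiable (at x)"
    using assms by (auto simp: differentiable_on_eq_differentiable_at)
  then show ?thesis
    by (rule has_derivative_grad)
qed

lemma continuous_on_phi: "continuous_on \<Omega> \<phi>"
proof (rule continuous_at_imp_continuous_on, intro ballI)
  show "isCont \<phi> x" if "x \<in> \<Omega>" for x
    using phi_has_derivative that closure_subset by (blast intro: has_derivative_continuous)
qed

lemma grad_nonzero: "x \<in> closure \<Omega> \<Longrightarrow> grad \<phi> x \<noteq> 0"
  using grad_lower c0_pos by force

lemma open_tube: "open tube"
proof -
  have "tube = \<Omega> \<inter> \<phi> -` {-\<delta><..<\<delta>}"
    by auto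
  then show ?thesis
    using continuous_open_preimage[OF continuous_on_phi \<Omega>_open, of "{-\<delta><..<\<delta>}"] by simp
qed

lemma Gamma_subset_tube: "\<Gamma> \<subseteq> tube"
  using Gamma_memD \<delta>_pos by auto

lemma tangent_vector_if_orthogonal_grad:
  assumes "q \<in> \<Gamma>" and "grad \<phi> q \<bullet> v = 0"
  shows "v \<in> tangent_space \<Gamma> q"
proof (rule tangent_space_level_set)
  show "closed \<Gamma>"
    using \<Gamma>_compact by (rule compact_imp_closed)
  show "z \<in> \<Gamma>" if "z \<in> \<Omega>" and "\<phi> z = 0" for z
    using that \<Gamma>_level closure_subset by auto
  show "(\<phi> has_derivative (\<lambda>h. grad \<phi> q \<bullet> h)) (at q)" and "grad \<phi> q \<noteq> 0"
    using phi_has_derivative grad_nonzero Gamma_memD(2)[OF assms(1)] by auto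
qed (use assms Gamma_memD \<Omega>_open continuous_on_phi in auto)

lemma unit_normal:
  assumes "q \<in> \<Gamma>"
  shows "norm (\<nu> q) = 1" and "\<And>v. v \<in> tangent_space \<Gamma> q \<Longrightarrow> \<nu> q \<bullet> v = 0"
  using normal assms unfolding is_unit_outer_normal_def by auto

lemma grad_parallel_normal:
  assumes "q \<in> \<Gamma>"
  obtains l where "grad \<phi> q = l *\<^sub>R \<nu> q"
proof -
  define n where "n = grad \<phi> q"
  have "n \<noteq> 0"
    using grad_nonzero Gamma_memD(2)[OF assms] by (simp add: n_def)
  define k where "k = (\<nu> q \<bullet> n) / (n \<bullet> n)"
  define w where "w = \<nu> q - k *\<^sub>R n"
  have "n \<bullet> w = 0"
    using \<open>n \<noteq> 0\<close> by (simp add: w_def k_def inner_diff_right inner_commute)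
  then have "\<nu> q \<bullet> w = 0"
    using unit_normal(2)[OF assms] tangent_vector_if_orthogonal_grad[OF assms] by (simp add: n_def)
  then have "w \<bullet> w = 0"
    using \<open>n \<bullet> w = 0\<close> by (simp add: w_def inner_diff_left inner_commute)
  then have "\<nu> q = k *\<^sub>R n"
    by (simp add: w_def)
  moreover have "k \<noteq> 0"
    using unit_normal(1)[OF assms] calculation by auto
  ultimately show ?thesis
    using that[of "1 / k"] by (simp add: n_def)
qed

lemma A_grad:
  assumes "q \<in> \<Gamma>"
  shows "A q (grad \<phi> q) = grad \<phi> q"
proof -
  obtain l where "grad \<phi> q = l *\<^sub>R \<nu> q"
    using grad_parallel_normal[OF assms] .
  moreover have "linear (A q)"
    using A_linear assms by blast
  ultimately show ?thesis
    using A_nu assms by (simp add: linear_scale)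
qed

lemma A_coercive:
  assumes "q \<in> \<Gamma>"
  shows "min \<alpha> 1 * (norm h)\<^sup>2 \<le> A q h \<bullet> h"
proof (rule symmetric_coercive_if_coercive_on_orthogonal_complement)
  show "linear (A q)" and "A q (\<nu> q) = \<nu> q"
    using assms A_linear A_nu by auto
  show "x \<bullet> A q y = y \<bullet> A q x" for x y
  proof (rule linear_symmetric_if_symmetric_on_Basis)
    show "linear (A q)"
      using assms A_linear by blast
    show "i \<bullet> A q j = j \<bullet> A q i" if "i \<in> Basis" and "j \<in> Basis" for i j
      using assms A_sym that by blast
  qed
  show "norm (\<nu> q) = 1"
    using unit_normal(1)[OF assms] .
  obtain l where l: "grad \<phi> q = l *\<^sub>R \<nu> q"
    using grad_parallel_normal[OF assms] .
  show "\<alpha> * (norm \<xi>)\<^sup>2 \<le> \<xi> \<bullet> A q \<xi>" if "\<nu> q \<bullet> \<xi> = 0" for \<xi>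
  proof -
    have "\<xi> \<in> tangent_space \<Gamma> q"
      using that l by (intro tangent_vector_if_orthogonal_grad[OF assms]) simp
    then show ?thesis
      using A_ell assms by blast
  qed
qed

lemma A_bounded:
  obtains B where "B > 0" and "\<And>q h. q \<in> \<Gamma> \<Longrightarrow> norm (A q h) \<le> B * norm h"
proof (rule uniformly_bounded_linear_family[OF \<Gamma>_compact])
  show "linear (A q)" if "q \<in> \<Gamma>" for q
    using A_linear that by blast
  show "continuous_on \<Gamma> (\<lambda>x. i \<bullet> A x j)" if "i \<in> Basis" and "j \<in> Basis" for i j
    using A_C2 that Ck_on_surface_imp_continuous_on by blast
qed (rule that)


lemma flow_field_bounded:
  obtains V where "\<And>q y. q \<in> \<Gamma> \<Longrightarrow> y \<in> closure \<Omega> \<Longrightarrow> norm (flow_field A \<phi> q y) \<le> V"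
proof -
  obtain B where "B > 0" and B: "\<And>q h. q \<in> \<Gamma> \<Longrightarrow> norm (A q h) \<le> B * norm h"
    using A_bounded by blast
  define m where "m = min \<alpha> 1"
  have "m > 0"
    using \<alpha>_pos by (simp add: m_def)
  have "norm (flow_field A \<phi> q y) \<le> B / (m * c0)" if "q \<in> \<Gamma>" and "y \<in> closure \<Omega>" for q y
  proof -
    define N where "N = grad \<phi> y"
    have "c0 \<le> norm N"
      using grad_lower that(2) by (simp add: N_def)
    then have "0 < norm N"
      using c0_pos by linarith
    then have "0 < m * (norm N)\<^sup>2"
      using \<open>m > 0\<close> by simp
    moreover have denominator: "m * (norm N)\<^sup>2 \<le> A q N \<bullet> N"
      using A_coercive[OF that(1)] by (simp add: m_def)
    ultimately have "norm (flow_field A \<phi> q y) = norm (A q N) / (A q N \<bullet> N)"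
      by (simp add: flow_field_def N_def)
    also have "\<dots> \<le> (B * norm N) / (m * (norm N)\<^sup>2)"
      using B[OF that(1)] denominator \<open>0 < m * (norm N)\<^sup>2\<close> \<open>B > 0\<close> by (intro frac_le) auto
    also have "\<dots> = B / (m * norm N)"
      by (simp add: power2_eq_square)
    also have "\<dots> \<le> B / (m * c0)"
      using \<open>B > 0\<close> \<open>m > 0\<close> \<open>c0 \<le> norm N\<close> c0_pos
      by (intro divide_left_mono mult_left_mono mult_pos_pos) auto
    finally show ?thesis .
  qed
  then show ?thesis
    using that by blast
qed

lemma infdist_le_phi:
  obtains V where "\<And>x. x \<in> tube \<Longrightarrow> infdist x \<Gamma> \<le> V * \<bar>\<phi> x\<bar>"
proof -
  obtain V where V: "\<And>q y. q \<in> \<Gamma> \<Longrightarrow> y \<in> closure \<Omega> \<Longrightarrow> norm (flow_field A \<phi> q y) \<le> V"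
    using flow_field_bounded by blast
  have "infdist x \<Gamma> \<le> V * \<bar>\<phi> x\<bar>" if "x \<in> tube" for x
  proof -
    have "p x \<in> \<Gamma>" and x: "\<gamma> (p x) (\<phi> x) = x"
      using p_inv that by auto
    then have "norm (\<gamma> (p x) (\<phi> x) - \<gamma> (p x) 0) \<le> V * \<bar>\<phi> x - 0\<bar>"
      using ode V that \<delta>_pos
      by (intro norm_displacement_le_bounded_velocity[where T="{-\<delta><..<\<delta>}"
            and g'="\<lambda>t. flow_field A \<phi> (p x) (\<gamma> (p x) t)"]) auto
    then have "dist x (p x) \<le> V * \<bar>\<phi> x\<bar>"
      using x ode \<open>p x \<in> \<Gamma>\<close> by (simp add: dist_norm)
    then show ?thesis
      using infdist_le[OF \<open>p x \<in> \<Gamma>\<close>, of x] by linarith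
  qed
  then show ?thesis
    using that by blast
qed

lemma p_flow_line:
  assumes "q \<in> \<Gamma>" and "s \<in> {-\<delta><..<\<delta>}"
  shows "p (\<gamma> q s) = q"
proof -
  have "\<gamma> q s \<in> (\<lambda>(q, s). \<gamma> q s) ` (\<Gamma> \<times> {-\<delta><..<\<delta>})"
    using assms by (intro image_eqI[of _ _ "(q, s)"]) auto
  then have "\<gamma> q s \<in> tube"
    using F_bij by (simp only: bij_betw_def)
  then have "p (\<gamma> q s) \<in> \<Gamma>" and "\<gamma> (p (\<gamma> q s)) (\<phi> (\<gamma> q s)) = \<gamma> q s" and "\<phi> (\<gamma> q s) \<in> {-\<delta><..<\<delta>}"
    using p_inv by auto
  moreover have "inj_on (\<lambda>(q, s). \<gamma> q s) (\<Gamma> \<times> {-\<delta><..<\<delta>})"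
    using F_bij by (simp add: bij_betw_def)
  ultimately have "(p (\<gamma> q s), \<phi> (\<gamma> q s)) = (q, s)"
    using assms by (intro inj_onD[of "\<lambda>(q, s). \<gamma> q s"]) auto
  then show ?thesis
    by simp
qed

lemma p_Gamma: "q \<in> \<Gamma> \<Longrightarrow> p q = q"
  using p_flow_line[of q 0] ode \<delta>_pos by simp

lemma hat_p_Gamma: "q \<in> \<Gamma> \<Longrightarrow> hat_p \<Gamma> q = q"
  by (simp add: hat_p_def signed_dist_def)

lemma hat_p_C2: "Ck_on 2 \<Omega> (hat_p \<Gamma>)"
proof -
  have "Ck_on (Suc 2) \<Omega> (signed_dist \<Gamma>)"
    using d_smooth unfolding smooth_on_def by blast
  then have "Ck_on 2 \<Omega> (signed_dist \<Gamma>)" and "Ck_on 2 \<Omega> (grad (signed_dist \<Gamma>))"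
    by (rule Ck_on_Suc_imp_Ck_on, rule Ck_on_grad[OF \<Omega>_open])
  then show ?thesis
    unfolding hat_p_def[abs_def] by (rule Ck_on_diff[OF \<Omega>_open Ck_on_ident Ck_on_scaleR[OF \<Omega>_open]])
qed

lemma frechet_derivative_p_grad:
  assumes "q \<in> \<Gamma>"
  shows "frechet_derivative p (at q) (grad \<phi> q) = 0"
proof -
  define n where "n = grad \<phi> q"
  have "n \<noteq> 0"
    using grad_nonzero Gamma_memD(2)[OF assms] by (simp add: n_def)
  have "0 \<in> {-\<delta><..<\<delta>}"
    using \<delta>_pos by simp
  then have "(\<gamma> q has_vector_derivative flow_field A \<phi> q (\<gamma> q 0)) (at 0)"
    using ode assms by blast
  then have "(\<gamma> q has_vector_derivative (1 / (n \<bullet> n)) *\<^sub>R n) (at 0)"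
    using ode assms A_grad[OF assms] by (simp add: flow_field_def n_def)
  moreover have "p differentiable (at (\<gamma> q 0))"
    using ode assms Gamma_subset_tube by (auto intro: Ck_on_differentiable[OF p_C2 _ open_tube])
  ultimately have "frechet_derivative p (at (\<gamma> q 0)) ((1 / (n \<bullet> n)) *\<^sub>R n) = 0"
    using p_flow_line[OF assms] \<open>0 \<in> {-\<delta><..<\<delta>}\<close>
    by (intro frechet_derivative_zero_along_curve[where T="{-\<delta><..<\<delta>}"]) auto
  then show ?thesis
    using ode assms \<open>n \<noteq> 0\<close> \<open>p differentiable (at (\<gamma> q 0))\<close>
    by (simp add: linear_scale[OF linear_frechet_derivative] n_def)
qed

lemma frechet_derivative_hat_p_grad:
  assumes "q \<in> \<Gamma>"
  shows "frechet_derivative (hat_p \<Gamma>) (at q) (grad \<phi> q) = 0"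
proof (rule frechet_derivative_nearest_point_normal[where S=\<Omega>])
  show "hat_p \<Gamma> differentiable (at q)"
    using Gamma_memD(1)[OF assms] by (intro Ck_on_differentiable[OF hat_p_C2 _ \<Omega>_open]) auto
  show "(\<phi> has_derivative (\<lambda>h. grad \<phi> q \<bullet> h)) (at q)"
    using phi_has_derivative Gamma_memD(2)[OF assms] .
  show "\<phi> (hat_p \<Gamma> y) = 0 \<and> dist y (hat_p \<Gamma> y) \<le> dist y q" if "y \<in> \<Omega>" for y
    using closest that Gamma_memD(3) infdist_le[OF assms] by auto
qed (use Gamma_memD(1)[OF assms] hat_p_Gamma[OF assms] \<Omega>_open in simp_all)

lemma frechet_derivative_p_minus_hat_p:
  assumes "q \<in> \<Gamma>"
  shows "frechet_derivative (\<lambda>x. p x - hat_p \<Gamma> x) (at q) = (\<lambda>h. 0)"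
proof
  fix h
  define G where "G = (\<lambda>x. p x - hat_p \<Gamma> x)"
  have p_diff: "p differentiable (at q)" and hat_p_diff: "hat_p \<Gamma> differentiable (at q)"
    using assms Gamma_subset_tube Gamma_memD(1)
    by (auto intro: Ck_on_differentiable[OF p_C2 _ open_tube] Ck_on_differentiable[OF hat_p_C2 _ \<Omega>_open])
  then have G_diff: "G differentiable (at q)"
    unfolding G_def by (rule differentiable_diff)
  have "(G has_derivative (\<lambda>v. frechet_derivative p (at q) v - frechet_derivative (hat_p \<Gamma>) (at q) v)) (at q)"
    unfolding G_def using p_diff hat_p_diff by (intro has_derivative_diff) (simp_all add: frechet_derivative_works)
  then have "frechet_derivative G (at q) (grad \<phi> q) = 0"
    using frechet_derivative_p_grad[OF assms] frechet_derivative_hat_p_grad[OF assms]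
    by (simp add: frechet_derivative_at[symmetric])
  moreover have "frechet_derivative G (at q) v = 0" if v: "grad \<phi> q \<bullet> v = 0" for v
  proof -
    obtain c where c: "c 0 = q" "\<And>t. c t \<in> \<Gamma>" "(c has_vector_derivative v) (at 0)"
      using tangent_vector_if_orthogonal_grad[OF assms v] unfolding tangent_space_def by blast
    have "G (c t) = G (c 0)" for t
      using c(1,2) assms p_Gamma hat_p_Gamma by (simp add: G_def)
    then have "frechet_derivative G (at (c 0)) v = 0"
      using G_diff c(1) by (intro frechet_derivative_zero_along_curve[where T=UNIV, OF _ c(3)]) simp_all
    then show ?thesis
      using c(1) by simp
  qed
  ultimately have "frechet_derivative G (at q) h = 0"
    using linear_eq_zero_if_zero_on_vector_and_orthogonal_complement[OF linear_frechet_derivative[OF G_diff]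
        grad_nonzero[OF Gamma_memD(2)[OF assms]]] by blast
  then show "frechet_derivative (\<lambda>x. p x - hat_p \<Gamma> x) (at q) h = 0"
    by (simp add: G_def)
qed

lemma bounded_p_minus_hat_p: "bounded ((\<lambda>x. p x - hat_p \<Gamma> x) ` tube)"
proof -
  obtain R where R: "\<And>a. a \<in> \<Gamma> \<Longrightarrow> norm a \<le> R"
    using compact_imp_bounded[OF \<Gamma>_compact] unfolding bounded_iff by blast
  have "norm (p x - hat_p \<Gamma> x) \<le> R + R" if "x \<in> tube" for x
  proof -
    have "p x \<in> \<Gamma>" and "hat_p \<Gamma> x \<in> \<Gamma>"
      using p_inv closest that by auto
    then have "norm (p x) + norm (hat_p \<Gamma> x) \<le> R + R"
      using R by (intro add_mono)
    then show ?thesis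
      using norm_triangle_ineq4[of "p x" "hat_p \<Gamma> x"] by linarith
  qed
  then show ?thesis
    unfolding bounded_iff by blast
qed

lemma p_minus_hat_p_quadratic_bound: "\<exists>C. \<forall>x\<in>tube. norm (p x - hat_p \<Gamma> x) \<le> C * (\<phi> x)\<^sup>2"
proof -
  have "Ck_on 2 tube (\<lambda>x. p x - hat_p \<Gamma> x)"
    using Ck_on_subset[OF hat_p_C2, of tube] by (intro Ck_on_diff[OF open_tube p_C2]) auto
  moreover have "p q - hat_p \<Gamma> q = 0" if "q \<in> \<Gamma>" for q
    using that p_Gamma hat_p_Gamma by simp
  ultimately obtain C where C: "\<And>x. x \<in> tube \<Longrightarrow> norm (p x - hat_p \<Gamma> x) \<le> C * (infdist x \<Gamma>)\<^sup>2"
    using Ck2_bound_by_infdist_squared[OF open_tube _ \<Gamma>_compact \<Gamma>_ne Gamma_subset_tube _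
        frechet_derivative_p_minus_hat_p bounded_p_minus_hat_p] by blast
  obtain V where V: "\<And>x. x \<in> tube \<Longrightarrow> infdist x \<Gamma> \<le> V * \<bar>\<phi> x\<bar>"
    using infdist_le_phi by blast
  have "norm (p x - hat_p \<Gamma> x) \<le> (max C 0 * V\<^sup>2) * (\<phi> x)\<^sup>2" if "x \<in> tube" for x
  proof -
    have "(infdist x \<Gamma>)\<^sup>2 \<le> (V * \<bar>\<phi> x\<bar>)\<^sup>2"
      using V[OF that] by (simp add: power_mono infdist_nonneg)
    then have "max C 0 * (infdist x \<Gamma>)\<^sup>2 \<le> max C 0 * (V * \<bar>\<phi> x\<bar>)\<^sup>2"
      by (simp add: mult_left_mono)
    moreover have "C * (infdist x \<Gamma>)\<^sup>2 \<le> max C 0 * (infdist x \<Gamma>)\<^sup>2"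
      by (simp add: mult_right_mono)
    ultimately show ?thesis
      using C[OF that] by (simp add: power_mult_distrib)
  qed
  then show ?thesis
    by blast
qed

end

theorem mainTheorem6:
  fixes \<Gamma> \<Omega> :: "'a::euclidean_space set" and \<nu> :: "'a \<Rightarrow> 'a" and A :: "'a \<Rightarrow> 'a \<Rightarrow> 'a"
    and \<alpha> c0 c1 \<delta> :: real and \<phi> :: "'a \<Rightarrow> real" and \<gamma> :: "'a \<Rightarrow> real \<Rightarrow> 'a"
    and p :: "'a \<Rightarrow> 'a"
  assumes dim: "DIM('a) = 2 \<or> DIM('a) = 3"
    and \<Gamma>_compact: "compact \<Gamma>" and \<Gamma>_connected: "connected \<Gamma>" and \<Gamma>_ne: "\<Gamma> \<noteq> {}"
    and \<Omega>_open: "open \<Omega>" and \<Gamma>_sub: "\<Gamma> \<subseteq> \<Omega>"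
    and d_smooth: "smooth_on \<Omega> (signed_dist \<Gamma>)"
    and closest: "\<forall>x\<in>\<Omega>. hat_p \<Gamma> x \<in> \<Gamma> \<and> dist x (hat_p \<Gamma> x) = infdist x \<Gamma>"
    and normal: "\<forall>x\<in>\<Gamma>. is_unit_outer_normal \<Gamma> x (\<nu> x)"
    and A_linear: "\<forall>x\<in>\<Gamma>. linear (A x)"
    and A_C2: "\<forall>i\<in>Basis. \<forall>j\<in>Basis. Ck_on_surface 2 \<Gamma> (\<lambda>x. i \<bullet> A x j)"
    and A_sym: "\<forall>x\<in>\<Gamma>. \<forall>i\<in>Basis. \<forall>j\<in>Basis. i \<bullet> A x j = j \<bullet> A x i"
    and A_tan_nu: "\<forall>x\<in>\<Gamma>. \<forall>\<xi>\<in>tangent_space \<Gamma> x. \<xi> \<bullet> A x (\<nu> x) = 0"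
    and \<alpha>_pos: "\<alpha> > 0"
    and A_ell: "\<forall>x\<in>\<Gamma>. \<forall>\<xi>\<in>tangent_space \<Gamma> x. \<xi> \<bullet> A x \<xi> \<ge> \<alpha> * (norm \<xi>)\<^sup>2"
    and A_nu: "\<forall>x\<in>\<Gamma>. A x (\<nu> x) = \<nu> x"
    and \<phi>_smooth: "\<exists>W. open W \<and> closure \<Omega> \<subseteq> W \<and> smooth_on W \<phi>"
    and \<Gamma>_level: "\<Gamma> = {x\<in>closure \<Omega>. \<phi> x = 0}"
    and c0_pos: "0 < c0"
    and grad_bounds: "\<forall>x\<in>closure \<Omega>. c0 \<le> norm (grad \<phi> x) \<and> norm (grad \<phi> x) \<le> c1"
    and \<delta>_pos: "\<delta> > 0"
    and ode: "\<forall>q\<in>\<Gamma>. \<gamma> q 0 = q \<and> (\<forall>s\<in>{-\<delta><..<\<delta>}. \<gamma> q s \<in> closure \<Omega> \<and>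
                 (\<gamma> q has_vector_derivative flow_field A \<phi> q (\<gamma> q s)) (at s))"
    and ode_unique: "\<forall>q\<in>\<Gamma>. \<forall>\<eta>. \<eta> 0 = q \<and> (\<forall>s\<in>{-\<delta><..<\<delta>}. \<eta> s \<in> closure \<Omega> \<and>
                 (\<eta> has_vector_derivative flow_field A \<phi> q (\<eta> s)) (at s))
                 \<longrightarrow> (\<forall>s\<in>{-\<delta><..<\<delta>}. \<eta> s = \<gamma> q s)"
    and F_bij: "bij_betw (\<lambda>(q, s). \<gamma> q s) (\<Gamma> \<times> {-\<delta><..<\<delta>}) {x\<in>\<Omega>. \<bar>\<phi> x\<bar> < \<delta>}"
    and p_inv: "\<forall>x\<in>{x\<in>\<Omega>. \<bar>\<phi> x\<bar> < \<delta>}. p x \<in> \<Gamma> \<and> \<gamma> (p x) (\<phi> x) = x"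
    and p_C2: "Ck_on 2 {x\<in>\<Omega>. \<bar>\<phi> x\<bar> < \<delta>} p"
  shows "\<exists>C. \<forall>x\<in>{x\<in>\<Omega>. \<bar>\<phi> x\<bar> < \<delta>}. norm (p x - hat_p \<Gamma> x) \<le> C * (\<phi> x)\<^sup>2"
proof -
  (* Not needed: the dimension, connectedness of \<Gamma>, uniqueness of the flow lines, the upper
     gradient bound c1, and A_tan_nu (which follows from A_sym and A_nu). *)
  have "\<forall>x\<in>closure \<Omega>. c0 \<le> norm (grad \<phi> x)"
    using grad_bounds by blast
  then have "flow_projection \<Gamma> \<Omega> \<nu> A \<alpha> c0 \<delta> \<phi> \<gamma> p"
    using assms by unfold_locales blast+
  then show ?thesis
    by (rule flow_projection.p_minus_hat_p_quadratic_bound)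
qed

end
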